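(* Let $B$ be the randomized response mechanism $B(y)=|h(y)-(1-V)|$ with $h:\mathbb Y\to\{0,1\}$, $V\sim\mathrm{Bern}(\theta)$, $\theta\in[0,1]$, and let $M=B\circ S$ with $S$ Poisson subsampling of rate $r$. Then for all $x\simeq_{K_+,K_-}x'$, $$\Psi_\alpha(m_x\|m_{x'})\le\max_{\tau\in\{\theta,1-\theta\}}\Psi_\alpha\big((1-w^{(1)})\mathrm{Bern}(\cdot\mid\theta)+w^{(1)}\mathrm{Bern}(\cdot\mid\tau)\ \big\|\ (1-w^{(2)})\mathrm{Bern}(\cdot\mid\theta)+w^{(2)}\mathrm{Bern}(\cdot\mid1-\tau)\big),$$ where $w^{(1)}=1-(1-r)^{K_-}$ and $w^{(2)}=1-(1-r)^{K_+}$.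
   Context: Finite set $\mathbb A$, datasets $x\subseteq\mathbb A$, batches are subsets $y\subseteq x$. Poisson subsampling with rate $r$: $s_x(y)=r^{|y|}(1-r)^{|x|-|y|}$ for $y\subseteq x$; $m_x(z)=\sum_y b_y(z)s_x(y)$ where $b_y$ is the pmf of $B(y)$ on $\{0,1\}$. $\mathrm{Bern}(\cdot\mid p)$ is the pmf on $\{0,1\}$ with mass $p$ at $1$. $x\simeq_{K_+,K_-}x'$ iff $x'=(x\setminus g_-)\cup g_+$ with $g_-\subseteq x$, $|g_-|=K_-$, $g_+\cap x=\emptyset$, $|g_+|=K_+$. For pmfs on $\{0,1\}$: $H_\alpha(p\|q)=\sum_z\max\{p(z)-\alpha q(z),0\}$ ($\alpha\ge0$), $\Lambda_\alpha(p\|q)=\sum_z p(z)^\alpha q(z)^{1-\alpha}$ ($\alpha>1$); $\Psi_\alpha$ is either. *)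

theory Defs
  imports "HOL-Analysis.Analysis"
begin

text \<open>Pmfs on {0,1} are represented as functions nat => real; only z in {0,1} matter.\<close>

definition Bern :: "real \<Rightarrow> nat \<Rightarrow> real" where
  "Bern p z = (if z = 1 then p else if z = 0 then 1 - p else 0)"

definition rr_pmf :: "('b \<Rightarrow> nat) \<Rightarrow> real \<Rightarrow> 'b \<Rightarrow> nat \<Rightarrow> real" where
  "rr_pmf h \<theta> y z =
     (\<Sum>v\<in>{0::nat,1}. Bern \<theta> v *
        (if nat \<bar>int (h y) - (1 - int v)\<bar> = z then 1 else 0))"

definition poisson_sub :: "real \<Rightarrow> 'a set \<Rightarrow> 'a set \<Rightarrow> real" where
  "poisson_sub r x y = r ^ card y * (1 - r) ^ (card x - card y)"

definition subsampled_pmf ::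
  "('a set \<Rightarrow> nat) \<Rightarrow> real \<Rightarrow> real \<Rightarrow> 'a set \<Rightarrow> nat \<Rightarrow> real" where
  "subsampled_pmf h \<theta> r x z = (\<Sum>y\<in>Pow x. rr_pmf h \<theta> y z * poisson_sub r x y)"

definition neighbours :: "nat \<Rightarrow> nat \<Rightarrow> 'a set \<Rightarrow> 'a set \<Rightarrow> bool" where
  "neighbours Kp Km x x' \<longleftrightarrow>
     (\<exists>gm gp. x' = (x - gm) \<union> gp \<and> gm \<subseteq> x \<and> card gm = Km \<and>
              gp \<inter> x = {} \<and> finite gp \<and> card gp = Kp)"

definition hockey_stick :: "real \<Rightarrow> (nat \<Rightarrow> real) \<Rightarrow> (nat \<Rightarrow> real) \<Rightarrow> real" where
  "hockey_stick \<alpha> p q = (\<Sum>z\<in>{0::nat,1}. max (p z - \<alpha> * q z) 0)"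

definition renyi_moment :: "real \<Rightarrow> (nat \<Rightarrow> real) \<Rightarrow> (nat \<Rightarrow> real) \<Rightarrow> ereal" where
  "renyi_moment \<alpha> p q = (\<Sum>z\<in>{0::nat,1}.
      if p z = 0 then 0
      else if q z = 0 then \<infinity>
      else ereal (p z powr \<alpha> * q z powr (1 - \<alpha>)))"

definition mix :: "real \<Rightarrow> (nat \<Rightarrow> real) \<Rightarrow> (nat \<Rightarrow> real) \<Rightarrow> nat \<Rightarrow> real" where
  "mix w p q z = (1 - w) * p z + w * q z"

end

theory Submission
  imports Defs
begin

text \<open>
  Randomized response outputs \<open>Bern \<theta>\<close> on a batch \<open>y\<close> with \<open>h y = 1\<close> and \<open>Bern (1 - \<theta>)\<close>
  on one with \<open>h y = 0\<close>, so \<open>m\<^sub>x = rr_mix \<theta> a\<close> is their mixture with weight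
  \<open>a = P(h(batch) = 0)\<close> under Poisson subsampling of \<open>x\<close>. Each divergence then becomes a
  function \<open>D(a, b)\<close> of the weights of \<open>x\<close> and \<open>x'\<close> that is quasiconvex on the unit square,
  minimal on the diagonal and invariant under \<open>(a, b) \<mapsto> (1 - a, 1 - b)\<close>.
  Conditioning on the batch \<open>y\<^sub>0\<close> drawn from the common part \<open>x - g\<^sub>-\<close>, the
  remaining randomness avoids \<open>g\<^sub>-\<close> and \<open>g\<^sub>+\<close> with probabilities \<open>1 - w\<^sub>1\<close> and
  \<open>1 - w\<^sub>2\<close>, so the conditional pair of weights lies in the box \<open>[0, w\<^sub>1] \<times> [0, w\<^sub>2]\<close>
  or in its reflection, according to \<open>h y\<^sub>0\<close>. Both boxes lie in the convex sublevel set
  of \<open>D\<close> at \<open>max (D(w\<^sub>1, 0)) (D(0, w\<^sub>2))\<close>, and so does their average \<open>(a, b)\<close>; the two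
  values are the two choices of \<open>\<tau>\<close>.
\<close>

section \<open>Expectations under Poisson subsampling\<close>

definition poisson_expectation :: "real \<Rightarrow> 'a set \<Rightarrow> ('a set \<Rightarrow> 'b::real_vector) \<Rightarrow> 'b" where
  "poisson_expectation r X f = (\<Sum>y\<in>Pow X. poisson_sub r X y *\<^sub>R f y)"

lemma poisson_sub_nonneg: "0 \<le> r \<Longrightarrow> r \<le> 1 \<Longrightarrow> 0 \<le> poisson_sub r X y"
  by (simp add: poisson_sub_def)

lemma poisson_sub_empty: "poisson_sub r X {} = (1 - r) ^ card X"
  by (simp add: poisson_sub_def)

lemma sum_poisson_sub:
  assumes "finite X"
  shows "(\<Sum>y\<in>Pow X. poisson_sub r X y) = 1"
proof -
  have "(\<Sum>y\<in>Pow X. poisson_sub r X y) = (\<Sum>y\<in>Pow X. (\<Prod>_\<in>y. r) * (\<Prod>_\<in>X - y. 1 - r))"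
    using assms by (intro sum.cong) (auto simp: poisson_sub_def card_Diff_subset finite_subset)
  also have "\<dots> = (\<Prod>_\<in>X. r + (1 - r))"
    by (rule prod_add[OF assms, symmetric])
  finally show ?thesis by simp
qed

lemma poisson_expectation_const: "finite X \<Longrightarrow> poisson_expectation r X (\<lambda>_. c) = c"
  by (simp add: poisson_expectation_def scaleR_sum_left[symmetric] sum_poisson_sub)

lemma poisson_expectation_affine:
  fixes g :: "'a set \<Rightarrow> real"
  assumes "finite X"
  shows "poisson_expectation r X (\<lambda>y. c + d * g y) = c + d * poisson_expectation r X g"
  using poisson_expectation_const[OF assms, of r c]
  by (simp add: poisson_expectation_def sum.distrib sum_distrib_left algebra_simps)

lemma poisson_expectation_Pair:
  "poisson_expectation r X (\<lambda>y. (f y, g y)) = (poisson_expectation r X f, poisson_expectation r X g)"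
  by (simp add: poisson_expectation_def prod_eq_iff fst_sum snd_sum)

lemma poisson_expectation_in_convex:
  assumes "finite X" "0 \<le> r" "r \<le> 1" "convex C" "\<And>y. y \<subseteq> X \<Longrightarrow> f y \<in> C"
  shows "poisson_expectation r X f \<in> C"
  unfolding poisson_expectation_def
  using assms by (intro convex_sum) (auto simp: sum_poisson_sub poisson_sub_nonneg)

lemma poisson_expectation_empty: "poisson_expectation r {} f = f {}"
  by (simp add: poisson_expectation_def poisson_sub_def)

lemma poisson_expectation_insert:
  assumes "finite X" "a \<notin> X"
  shows "poisson_expectation r (insert a X) f
           = poisson_expectation r X (\<lambda>y. r *\<^sub>R f (insert a y) + (1 - r) *\<^sub>R f y)"
proof -
  have card_le: "card y \<le> card X" if "y \<subseteq> X" for y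
    using that assms by (simp add: card_mono)
  have weight_without: "poisson_sub r (insert a X) y = (1 - r) * poisson_sub r X y" if "y \<subseteq> X" for y
    using card_le[OF that] assms by (simp add: poisson_sub_def Suc_diff_le)
  have weight_with: "poisson_sub r (insert a X) (insert a y) = r * poisson_sub r X y" if "y \<subseteq> X" for y
  proof -
    have "finite y" "a \<notin> y" using that assms finite_subset by auto
    then show ?thesis using card_le[OF that] assms by (simp add: poisson_sub_def)
  qed
  have inj: "inj_on (insert a) (Pow X)"
    using assms by (auto intro!: inj_onI)
  have "poisson_expectation r (insert a X) f
        = (\<Sum>y\<in>Pow X. poisson_sub r (insert a X) y *\<^sub>R f y)
          + (\<Sum>y\<in>insert a ` Pow X. poisson_sub r (insert a X) y *\<^sub>R f y)"
    unfolding poisson_expectation_def Pow_insert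
    using assms by (intro sum.union_disjoint) auto
  also have "\<dots> = (\<Sum>y\<in>Pow X. poisson_sub r X y *\<^sub>R ((1 - r) *\<^sub>R f y))
                 + (\<Sum>y\<in>Pow X. poisson_sub r X y *\<^sub>R (r *\<^sub>R f (insert a y)))"
    by (simp add: sum.reindex[OF inj] weight_without weight_with mult.commute)
  also have "\<dots> = poisson_expectation r X (\<lambda>y. r *\<^sub>R f (insert a y) + (1 - r) *\<^sub>R f y)"
    by (simp add: poisson_expectation_def scaleR_add_right sum.distrib)
  finally show ?thesis .
qed

lemma poisson_expectation_union:
  assumes "finite G" "finite S" "S \<inter> G = {}"
  shows "poisson_expectation r (S \<union> G) f
           = poisson_expectation r S (\<lambda>y0. poisson_expectation r G (\<lambda>y1. f (y0 \<union> y1)))"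
  using assms
proof (induction G arbitrary: f rule: finite_induct)
  case empty
  then show ?case by (simp add: poisson_expectation_empty)
next
  case (insert a G)
  have "poisson_expectation r (S \<union> insert a G) f = poisson_expectation r (insert a (S \<union> G)) f"
    by simp
  also have "\<dots> = poisson_expectation r (S \<union> G) (\<lambda>y. r *\<^sub>R f (insert a y) + (1 - r) *\<^sub>R f y)"
    using insert by (simp add: poisson_expectation_insert)
  also have "\<dots> = poisson_expectation r S (\<lambda>y0. poisson_expectation r (insert a G) (\<lambda>y1. f (y0 \<union> y1)))"
    using insert by (simp add: poisson_expectation_insert)
  finally show ?case .
qed

lemma poisson_expectation_bounds:
  fixes f :: "'a set \<Rightarrow> real"
  assumes "finite G" "0 \<le> r" "r \<le> 1" and f: "\<And>y. y \<subseteq> G \<Longrightarrow> 0 \<le> f y \<and> f y \<le> 1"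
  shows "(1 - r) ^ card G * f {} \<le> poisson_expectation r G f"
    and "poisson_expectation r G f \<le> (1 - r) ^ card G * f {} + (1 - (1 - r) ^ card G)"
proof -
  let ?rest = "Pow G - {{}}"
  have split: "(\<Sum>y\<in>Pow G. F y) = F {} + (\<Sum>y\<in>?rest. F y)" for F :: "'a set \<Rightarrow> real"
    using assms(1) by (simp add: sum.remove)
  have E: "poisson_expectation r G f = (1 - r) ^ card G * f {} + (\<Sum>y\<in>?rest. poisson_sub r G y * f y)"
    unfolding poisson_expectation_def split by (simp add: poisson_sub_empty)
  have W: "(\<Sum>y\<in>?rest. poisson_sub r G y) = 1 - (1 - r) ^ card G"
    using sum_poisson_sub[OF assms(1), of r] unfolding split by (simp add: poisson_sub_empty)
  have "0 \<le> (\<Sum>y\<in>?rest. poisson_sub r G y * f y)"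
    using f assms(2,3) by (intro sum_nonneg) (simp add: poisson_sub_nonneg)
  moreover have "(\<Sum>y\<in>?rest. poisson_sub r G y * f y) \<le> (\<Sum>y\<in>?rest. poisson_sub r G y)"
    using f assms(2,3) by (intro sum_mono) (simp add: poisson_sub_nonneg mult_left_le)
  ultimately show "(1 - r) ^ card G * f {} \<le> poisson_expectation r G f"
    and "poisson_expectation r G f \<le> (1 - r) ^ card G * f {} + (1 - (1 - r) ^ card G)"
    using E W by linarith+
qed

lemma poisson_expectation_neighbours:
  assumes "finite x" "neighbours Kp Km x x'"
  obtains S G G' where "finite S" "finite G" "finite G'" "card G = Km" "card G' = Kp"
    and "\<And>f. poisson_expectation r x f
               = poisson_expectation r S (\<lambda>y0. poisson_expectation r G (\<lambda>y1. f (y0 \<union> y1)))"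
    and "\<And>f. poisson_expectation r x' f
               = poisson_expectation r S (\<lambda>y0. poisson_expectation r G' (\<lambda>y1. f (y0 \<union> y1)))"
proof -
  obtain G G' where x': "x' = (x - G) \<union> G'" and G: "G \<subseteq> x" "card G = Km"
    and G': "G' \<inter> x = {}" "finite G'" "card G' = Kp"
    using assms(2) unfolding neighbours_def by blast
  have fin: "finite (x - G)" "finite G"
    using assms(1) G(1) finite_subset by auto
  have x: "(x - G) \<union> G = x"
    using G(1) by auto
  show ?thesis
  proof (rule that[OF fin(1,2) G'(2) G(2) G'(3)])
    show "poisson_expectation r x f
          = poisson_expectation r (x - G) (\<lambda>y0. poisson_expectation r G (\<lambda>y1. f (y0 \<union> y1)))" for f
      using poisson_expectation_union[OF fin(2,1), of r f] x by auto
    show "poisson_expectation r x' f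
          = poisson_expectation r (x - G) (\<lambda>y0. poisson_expectation r G' (\<lambda>y1. f (y0 \<union> y1)))" for f
      unfolding x' using fin G' by (intro poisson_expectation_union) auto
  qed
qed

section \<open>Quasiconvex functions on the unit square\<close>

definition quasiconvex_on :: "'a::real_vector set \<Rightarrow> ('a \<Rightarrow> 'b::order) \<Rightarrow> bool" where
  "quasiconvex_on S f \<longleftrightarrow> (\<forall>c. convex {x \<in> S. f x \<le> c})"

lemma quasiconvex_onI:
  assumes "convex S"
    and "\<And>x y t c. x \<in> S \<Longrightarrow> y \<in> S \<Longrightarrow> 0 \<le> t \<Longrightarrow> t \<le> 1 \<Longrightarrow> f x \<le> c \<Longrightarrow> f y \<le> c
           \<Longrightarrow> f ((1 - t) *\<^sub>R x + t *\<^sub>R y) \<le> c"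
  shows "quasiconvex_on S f"
  unfolding quasiconvex_on_def
proof (intro allI convexI)
  fix c x y and u v :: real
  assume "x \<in> {x \<in> S. f x \<le> c}" "y \<in> {x \<in> S. f x \<le> c}" "0 \<le> u" "0 \<le> v" "u + v = 1"
  moreover from \<open>u + v = 1\<close> have "u = 1 - v"
    by simp
  ultimately show "u *\<^sub>R x + v *\<^sub>R y \<in> {x \<in> S. f x \<le> c}"
    using assms convexD[OF assms(1)] by simp
qed

lemma quasiconvex_on_segment:
  assumes "quasiconvex_on S f" "p \<in> S" "q \<in> S" "f p \<le> c" "f q \<le> c" "0 \<le> t" "t \<le> 1"
    "x = (1 - t) *\<^sub>R p + t *\<^sub>R q"
  shows "f x \<le> c"
proof -
  have "x \<in> {x \<in> S. f x \<le> c}"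
    using assms convexD[of "{x \<in> S. f x \<le> c}" p q "1 - t" t] unfolding quasiconvex_on_def by auto
  then show ?thesis by simp
qed

lemma quasiconvex_box_le:
  fixes D :: "real \<times> real \<Rightarrow> 'b::linorder"
  assumes qc: "quasiconvex_on ({0..1} \<times> {0..1}) D"
    and diag: "\<And>c. c \<in> {0..1} \<Longrightarrow> D (c, c) \<le> D (w1, 0)"
    and w: "w1 \<in> {0..1}" "w2 \<in> {0..1}" and ab: "a \<in> {0..w1}" "b \<in> {0..w2}"
  shows "D (a, b) \<le> max (D (w1, 0)) (D (0, w2))"
proof -
  define M where "M = max (D (w1, 0)) (D (0, w2))"
  \<comment> \<open>also for \<open>v = 0\<close>, where \<open>u = 0\<close> and \<open>u / v = 0\<close>\<close>
  have ratio: "u / v \<in> {0..1}" "u / v * v = u" if "0 \<le> u" "u \<le> v" for u v :: real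
    using that by (auto simp: divide_le_eq_1)
  have seg: "D x \<le> M"
    if "p \<in> {0..1} \<times> {0..1}" "q \<in> {0..1} \<times> {0..1}" "D p \<le> M" "D q \<le> M" "t \<in> {0..1}"
       "x = (1 - t) *\<^sub>R p + t *\<^sub>R q" for p q x t
    using quasiconvex_on_segment[OF qc that(1-4)] that(5,6) by simp
  have corner1: "D (w1, 0) \<le> M" and corner2: "D (0, w2) \<le> M"
    by (simp_all add: M_def)
  have diagonal: "D (c, c) \<le> M" if "c \<in> {0..1}" for c
    using diag[OF that] corner1 by order
  have far_corner: "D (w1, w2) \<le> M"
  proof (cases "w2 \<le> w1")
    case True
    then show ?thesis
      using w ratio[of w2 w1] by (intro seg[OF _ _ corner1 diagonal, of w1 "w2 / w1"]) (auto simp: algebra_simps)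
  next
    case False
    then show ?thesis
      using w ratio[of w1 w2] by (intro seg[OF _ _ corner2 diagonal, of w2 "w1 / w2"]) (auto simp: algebra_simps)
  qed
  have bottom: "D (a, 0) \<le> M"
    using w ab ratio[of a w1] by (intro seg[OF _ _ diagonal corner1, of 0 "a / w1"]) auto
  have top: "D (a, w2) \<le> M"
    using w ab ratio[of a w1] by (intro seg[OF _ _ corner2 far_corner, of "a / w1"]) (auto simp: algebra_simps)
  show ?thesis
    using w ab ratio[of b w2] unfolding M_def[symmetric]
    by (intro seg[OF _ _ bottom top, of "b / w2"]) (auto simp: algebra_simps)
qed

lemma neighbours_expectation_le:
  fixes D :: "real \<Rightarrow> real \<Rightarrow> 'b::linorder" and g :: "'a set \<Rightarrow> real"
  assumes qc: "quasiconvex_on ({0..1} \<times> {0..1}) (case_prod D)"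
    and diag: "\<And>c a b. c \<in> {0..1} \<Longrightarrow> a \<in> {0..1} \<Longrightarrow> b \<in> {0..1} \<Longrightarrow> D c c \<le> D a b"
    and flip: "\<And>a b. D (1 - a) (1 - b) = D a b"
    and x: "finite x" and r: "0 \<le> r" "r \<le> 1"
    and nb: "neighbours Kp Km x x'" and g: "\<And>y. g y \<in> {0, 1}"
  shows "D (poisson_expectation r x g) (poisson_expectation r x' g)
           \<le> max (D (1 - (1 - r) ^ Km) 0) (D 0 (1 - (1 - r) ^ Kp))"
proof -
  define w1 where "w1 = 1 - (1 - r) ^ Km"
  define w2 where "w2 = 1 - (1 - r) ^ Kp"
  define M where "M = max (D w1 0) (D 0 w2)"
  define K where "K = {p \<in> {0..1} \<times> {0..1}. case_prod D p \<le> M}"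
  have w: "w1 \<in> {0..1}" "w2 \<in> {0..1}"
    using r by (simp_all add: w1_def w2_def power_le_one)
  have box: "(a, b) \<in> K" if "a \<in> {0..w1}" "b \<in> {0..w2}" for a b
    using quasiconvex_box_le[OF qc _ w that] diag[of _ w1 0] that w
    unfolding K_def M_def by auto
  have flipped_box: "(a, b) \<in> K" if "1 - a \<in> {0..w1}" "1 - b \<in> {0..w2}" for a b
    using box[OF that] flip[of a b] unfolding K_def by auto
  obtain S G G' where fin: "finite S" "finite G" "finite G'" and card: "card G = Km" "card G' = Kp"
    and Ex: "\<And>f :: 'a set \<Rightarrow> real. poisson_expectation r x f
                   = poisson_expectation r S (\<lambda>y0. poisson_expectation r G (\<lambda>y1. f (y0 \<union> y1)))"
    and Ex': "\<And>f :: 'a set \<Rightarrow> real. poisson_expectation r x' f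
                   = poisson_expectation r S (\<lambda>y0. poisson_expectation r G' (\<lambda>y1. f (y0 \<union> y1)))"
    using poisson_expectation_neighbours[OF x nb, where r = r] by blast
  define A where "A y0 = poisson_expectation r G (\<lambda>y1. g (y0 \<union> y1))" for y0
  define B where "B y0 = poisson_expectation r G' (\<lambda>y1. g (y0 \<union> y1))" for y0
  have g01: "0 \<le> g y \<and> g y \<le> 1" for y
    using g[of y] by auto
  have "(A y0, B y0) \<in> K" for y0
  proof -
    have "(1 - w1) * g y0 \<le> A y0" "A y0 \<le> (1 - w1) * g y0 + w1"
      using poisson_expectation_bounds[OF fin(2) r, of "\<lambda>y1. g (y0 \<union> y1)"] g01 card(1)
      by (simp_all add: A_def w1_def)
    moreover have "(1 - w2) * g y0 \<le> B y0" "B y0 \<le> (1 - w2) * g y0 + w2"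
      using poisson_expectation_bounds[OF fin(3) r, of "\<lambda>y1. g (y0 \<union> y1)"] g01 card(2)
      by (simp_all add: B_def w2_def)
    ultimately show ?thesis
      using g[of y0] box[of "A y0" "B y0"] flipped_box[of "A y0" "B y0"] by auto
  qed
  then have "poisson_expectation r S (\<lambda>y0. (A y0, B y0)) \<in> K"
    using fin(1) r qc by (intro poisson_expectation_in_convex) (auto simp: K_def quasiconvex_on_def)
  then have "(poisson_expectation r S A, poisson_expectation r S B) \<in> K"
    by (simp add: poisson_expectation_Pair)
  moreover have "poisson_expectation r x g = poisson_expectation r S A"
    "poisson_expectation r x' g = poisson_expectation r S B"
    by (simp_all add: Ex Ex' A_def[abs_def] B_def[abs_def])
  ultimately show ?thesis
    by (simp add: K_def M_def w1_def w2_def)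
qed

section \<open>Randomized response\<close>

definition rr_mix :: "real \<Rightarrow> real \<Rightarrow> nat \<Rightarrow> real" where
  "rr_mix \<theta> t = mix t (Bern \<theta>) (Bern (1 - \<theta>))"

lemma rr_mix_eq: "rr_mix \<theta> t z = Bern \<theta> z + t * (Bern (1 - \<theta>) z - Bern \<theta> z)"
  by (simp add: rr_mix_def mix_def algebra_simps)

lemma rr_pmf_eq_rr_mix:
  "h y \<in> {0, 1} \<Longrightarrow> rr_pmf h \<theta> y = rr_mix \<theta> (if h y = 0 then 1 else 0)"
  by (auto simp: fun_eq_iff rr_pmf_def rr_mix_def mix_def Bern_def)

lemma subsampled_pmf_eq_rr_mix:
  assumes "finite x" "\<And>y. h y \<in> {0, 1}"
  shows "subsampled_pmf h \<theta> r x = rr_mix \<theta> (poisson_expectation r x (\<lambda>y. if h y = 0 then 1 else 0))"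
proof
  fix z
  have "subsampled_pmf h \<theta> r x z
        = poisson_expectation r x (\<lambda>y. Bern \<theta> z + (Bern (1 - \<theta>) z - Bern \<theta> z) * (if h y = 0 then 1 else 0))"
    unfolding subsampled_pmf_def poisson_expectation_def rr_pmf_eq_rr_mix[of h, OF assms(2)] rr_mix_eq
    by (simp add: algebra_simps)
  then show "subsampled_pmf h \<theta> r x z = rr_mix \<theta> (poisson_expectation r x (\<lambda>y. if h y = 0 then 1 else 0)) z"
    unfolding poisson_expectation_affine[OF assms(1)] rr_mix_eq by (simp add: algebra_simps)
qed

lemma rr_mix_convex_combination:
  "rr_mix \<theta> ((1 - t) * a + t * b) = mix t (rr_mix \<theta> a) (rr_mix \<theta> b)"
  by (simp add: fun_eq_iff rr_mix_eq mix_def algebra_simps)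

lemma rr_mix_one_minus: "rr_mix \<theta> (1 - t) 0 = rr_mix \<theta> t 1" "rr_mix \<theta> (1 - t) 1 = rr_mix \<theta> t 0"
  by (simp_all add: rr_mix_eq Bern_def algebra_simps)

lemma rr_mix_zero: "rr_mix \<theta> 0 = Bern \<theta>"
  by (simp add: fun_eq_iff rr_mix_def mix_def)

lemma rr_mix_nonneg: "\<theta> \<in> {0..1} \<Longrightarrow> t \<in> {0..1} \<Longrightarrow> 0 \<le> rr_mix \<theta> t z"
  by (simp add: rr_mix_def mix_def Bern_def)

lemma rr_mix_sum: "rr_mix \<theta> t 0 + rr_mix \<theta> t 1 = 1"
  by (simp add: rr_mix_eq Bern_def algebra_simps)

lemma quasiconvex_on_rr_mix:
  fixes \<Phi> :: "(nat \<Rightarrow> real) \<Rightarrow> (nat \<Rightarrow> real) \<Rightarrow> 'b::order"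
  assumes \<theta>: "\<theta> \<in> {0..1}"
    and mix_le: "\<And>t p1 p2 q1 q2 c. t \<in> {0..1::real} \<Longrightarrow> (\<And>z. 0 \<le> p1 z \<and> 0 \<le> p2 z \<and> 0 \<le> q1 z \<and> 0 \<le> q2 z)
                   \<Longrightarrow> \<Phi> p1 q1 \<le> c \<Longrightarrow> \<Phi> p2 q2 \<le> c \<Longrightarrow> \<Phi> (mix t p1 p2) (mix t q1 q2) \<le> c"
  shows "quasiconvex_on ({0..1} \<times> {0..1}) (\<lambda>(a, b). \<Phi> (rr_mix \<theta> a) (rr_mix \<theta> b))"
proof (rule quasiconvex_onI)
  show "convex ({0..1::real} \<times> {0..1::real})"
    by (intro convex_Times) auto
next
  fix x y :: "real \<times> real" and t :: real and c :: 'b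
  obtain a1 b1 a2 b2 where xy: "x = (a1, b1)" "y = (a2, b2)"
    by fastforce
  assume "x \<in> {0..1} \<times> {0..1}" "y \<in> {0..1} \<times> {0..1}" "0 \<le> t" "t \<le> 1"
    and "(\<lambda>(a, b). \<Phi> (rr_mix \<theta> a) (rr_mix \<theta> b)) x \<le> c"
    and "(\<lambda>(a, b). \<Phi> (rr_mix \<theta> a) (rr_mix \<theta> b)) y \<le> c"
  then have "\<Phi> (mix t (rr_mix \<theta> a1) (rr_mix \<theta> a2)) (mix t (rr_mix \<theta> b1) (rr_mix \<theta> b2)) \<le> c"
    using xy \<theta> by (intro mix_le) (auto simp: rr_mix_nonneg)
  then show "(\<lambda>(a, b). \<Phi> (rr_mix \<theta> a) (rr_mix \<theta> b)) ((1 - t) *\<^sub>R x + t *\<^sub>R y) \<le> c"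
    using xy by (simp add: rr_mix_convex_combination)
qed

section \<open>Hockey-stick divergence\<close>

lemma hockey_stick_eq: "hockey_stick \<alpha> p q = max (p 0 - \<alpha> * q 0) 0 + max (p 1 - \<alpha> * q 1) 0"
  by (simp add: hockey_stick_def)

lemma hockey_stick_mix_le:
  assumes "0 \<le> t" "t \<le> 1"
  shows "hockey_stick \<alpha> (mix t p1 p2) (mix t q1 q2)
           \<le> (1 - t) * hockey_stick \<alpha> p1 q1 + t * hockey_stick \<alpha> p2 q2"
proof -
  have max_convex: "max ((1 - t) * u1 + t * u2) 0 \<le> (1 - t) * max u1 0 + t * max u2 0"
    for u1 u2 :: real
    using assms by (intro max.boundedI add_mono mult_left_mono) auto
  have "hockey_stick \<alpha> (mix t p1 p2) (mix t q1 q2)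
        = (\<Sum>z\<in>{0::nat,1}. max ((1 - t) * (p1 z - \<alpha> * q1 z) + t * (p2 z - \<alpha> * q2 z)) 0)"
    by (simp add: hockey_stick_def mix_def algebra_simps)
  also have "\<dots> \<le> (\<Sum>z\<in>{0::nat,1}. (1 - t) * max (p1 z - \<alpha> * q1 z) 0 + t * max (p2 z - \<alpha> * q2 z) 0)"
    by (intro sum_mono max_convex)
  also have "\<dots> = (1 - t) * hockey_stick \<alpha> p1 q1 + t * hockey_stick \<alpha> p2 q2"
    by (simp add: hockey_stick_def algebra_simps)
  finally show ?thesis .
qed

lemma hockey_stick_self:
  assumes "0 \<le> p 0" "0 \<le> p 1" "p 0 + p 1 = 1"
  shows "hockey_stick \<alpha> p p = max (1 - \<alpha>) 0"
proof -
  have "max (p z - \<alpha> * p z) 0 = max (1 - \<alpha>) 0 * p z" if "0 \<le> p z" for z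
    using that max_mult_distrib_left[of "p z" "1 - \<alpha>" 0] by (simp add: algebra_simps)
  then show ?thesis
    using assms by (simp add: hockey_stick_def flip: distrib_left)
qed

lemma hockey_stick_ge:
  assumes "p 0 + p 1 = 1" "q 0 + q 1 = 1"
  shows "max (1 - \<alpha>) 0 \<le> hockey_stick \<alpha> p q"
proof -
  have "1 - \<alpha> = (p 0 - \<alpha> * q 0) + (p 1 - \<alpha> * q 1)"
    using assms by (simp add: algebra_simps flip: distrib_left)
  then show ?thesis
    by (simp add: hockey_stick_def)
qed

lemma quasiconvex_on_hockey_stick_rr_mix:
  assumes "\<theta> \<in> {0..1}"
  shows "quasiconvex_on ({0..1} \<times> {0..1}) (\<lambda>(a, b). hockey_stick \<alpha> (rr_mix \<theta> a) (rr_mix \<theta> b))"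
proof (rule quasiconvex_on_rr_mix[OF assms])
  fix t :: real and p1 p2 q1 q2 c
  assume t: "t \<in> {0..1}" and le: "hockey_stick \<alpha> p1 q1 \<le> c" "hockey_stick \<alpha> p2 q2 \<le> c"
  have "hockey_stick \<alpha> (mix t p1 p2) (mix t q1 q2) \<le> (1 - t) * hockey_stick \<alpha> p1 q1 + t * hockey_stick \<alpha> p2 q2"
    using t by (intro hockey_stick_mix_le) auto
  also have "\<dots> \<le> c"
    using t le by (intro convex_bound_le) auto
  finally show "hockey_stick \<alpha> (mix t p1 p2) (mix t q1 q2) \<le> c" .
qed

lemma hockey_stick_rr_mix_diag_le:
  assumes "\<theta> \<in> {0..1}" "c \<in> {0..1}"
  shows "hockey_stick \<alpha> (rr_mix \<theta> c) (rr_mix \<theta> c) \<le> hockey_stick \<alpha> (rr_mix \<theta> a) (rr_mix \<theta> b)"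
  by (metis assms hockey_stick_self hockey_stick_ge rr_mix_nonneg rr_mix_sum)

lemma hockey_stick_rr_mix_flip:
  "hockey_stick \<alpha> (rr_mix \<theta> (1 - a)) (rr_mix \<theta> (1 - b)) = hockey_stick \<alpha> (rr_mix \<theta> a) (rr_mix \<theta> b)"
  unfolding hockey_stick_eq rr_mix_one_minus by (rule add.commute)

section \<open>Renyi moment\<close>

definition renyi_term :: "real \<Rightarrow> real \<Rightarrow> real \<Rightarrow> ereal" where
  "renyi_term \<alpha> p q = (if p = 0 then 0 else if q = 0 then \<infinity> else ereal (p powr \<alpha> * q powr (1 - \<alpha>)))"

lemma renyi_moment_eq: "renyi_moment \<alpha> p q = renyi_term \<alpha> (p 0) (q 0) + renyi_term \<alpha> (p 1) (q 1)"
  by (simp add: renyi_moment_def renyi_term_def)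

lemma renyi_term_nonneg: "0 \<le> renyi_term \<alpha> p q"
  by (simp add: renyi_term_def)

lemma renyi_term_self: "0 \<le> p \<Longrightarrow> renyi_term \<alpha> p p = ereal p"
  by (auto simp: renyi_term_def powr_add[symmetric])

lemma powr_ge_tangent_one:
  fixes \<alpha> t :: real
  assumes "1 \<le> \<alpha>" "0 \<le> t"
  shows "1 + \<alpha> * (t - 1) \<le> t powr \<alpha>"
proof (cases "t = 0")
  case True
  then show ?thesis using assms by simp
next
  case False
  have "((\<lambda>x. x powr \<alpha>) has_real_derivative \<alpha> * 1 powr (\<alpha> - 1)) (at 1 within {0<..})"
    by (rule has_field_derivative_at_within[OF has_real_derivative_powr]) simp
  then have "\<alpha> * 1 powr (\<alpha> - 1) * (t - 1) \<le> t powr \<alpha> - 1 powr \<alpha>"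
    using False assms by (intro convex_on_imp_above_tangent[OF powr_convex]) (auto simp: interior_open)
  then show ?thesis by simp
qed

text \<open>The tangent plane of the convex, positively homogeneous function
  \<open>(p, q) \<mapsto> p\<^sup>\<alpha> q\<^sup>1\<^sup>-\<^sup>\<alpha>\<close> along the ray \<open>p = s q\<close>; this is what makes \<open>renyi_term\<close>
  jointly convex.\<close>
lemma renyi_term_ge_tangent:
  assumes "1 < \<alpha>" "0 \<le> p" "0 \<le> q" "0 < s"
  shows "ereal (\<alpha> * s powr (\<alpha> - 1) * p - (\<alpha> - 1) * s powr \<alpha> * q) \<le> renyi_term \<alpha> p q"
proof (cases "p = 0 \<or> q = 0")
  case True
  then show ?thesis using assms by (auto simp: renyi_term_def)
next
  case False
  then have pq: "0 < p" "0 < q" using assms by auto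
  define t where "t = p / (s * q)"
  have "s powr \<alpha> * q * (1 + \<alpha> * (t - 1)) \<le> s powr \<alpha> * q * t powr \<alpha>"
    using powr_ge_tangent_one[of \<alpha> t] assms pq by (simp add: t_def)
  moreover have "s powr \<alpha> * q * (1 + \<alpha> * (t - 1)) = \<alpha> * s powr (\<alpha> - 1) * p - (\<alpha> - 1) * s powr \<alpha> * q"
  proof -
    have "s powr \<alpha> * q * t = s powr (\<alpha> - 1) * p"
      using pq assms by (simp add: t_def powr_diff field_simps)
    then show ?thesis by (simp add: algebra_simps)
  qed
  moreover have "s powr \<alpha> * q * t powr \<alpha> = p powr \<alpha> * q powr (1 - \<alpha>)"
    using pq assms by (simp add: t_def powr_divide powr_mult powr_diff field_simps)
  ultimately show ?thesis
    using pq by (simp add: renyi_term_def)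
qed

lemma renyi_term_convex:
  assumes "1 < \<alpha>" "0 \<le> t" "t \<le> 1" "0 \<le> p1" "0 \<le> q1" "0 \<le> p2" "0 \<le> q2"
  shows "renyi_term \<alpha> ((1 - t) * p1 + t * p2) ((1 - t) * q1 + t * q2)
           \<le> ereal (1 - t) * renyi_term \<alpha> p1 q1 + ereal t * renyi_term \<alpha> p2 q2"
proof -
  define p where "p = (1 - t) * p1 + t * p2"
  define q where "q = (1 - t) * q1 + t * q2"
  have pq: "0 \<le> p" "0 \<le> q"
    using assms by (simp_all add: p_def q_def)
  have rhs_nonneg: "0 \<le> ereal (1 - t) * renyi_term \<alpha> p1 q1" "0 \<le> ereal t * renyi_term \<alpha> p2 q2"
    using assms renyi_term_nonneg by simp_all
  consider "p = 0" | "0 < p" "q = 0" | "0 < p" "0 < q"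
    using pq by linarith
  then show ?thesis
  proof cases
    case 1
    then show ?thesis
      using rhs_nonneg by (simp add: p_def renyi_term_def)
  next
    case 2
    then have "(1 - t) * q1 = 0" "t * q2 = 0" "0 < (1 - t) * p1 \<or> 0 < t * p2"
      using assms unfolding p_def q_def by (smt (verit) mult_nonneg_nonneg)+
    then have "ereal (1 - t) * renyi_term \<alpha> p1 q1 = \<infinity> \<or> ereal t * renyi_term \<alpha> p2 q2 = \<infinity>"
      using assms by (auto simp: renyi_term_def zero_less_mult_iff)
    then show ?thesis
      using rhs_nonneg by auto
  next
    case 3
    define s where "s = p / q"
    have s: "0 < s"
      using 3 by (simp add: s_def)
    define T where "T p' q' = \<alpha> * s powr (\<alpha> - 1) * p' - (\<alpha> - 1) * s powr \<alpha> * q'" for p' q'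
    have "(1 - t) * T p1 q1 + t * T p2 q2 = \<alpha> * s powr (\<alpha> - 1) * p - (\<alpha> - 1) * s powr \<alpha> * q"
      unfolding T_def p_def q_def by (simp add: algebra_simps)
    also have "\<dots> = p powr \<alpha> * q powr (1 - \<alpha>)"
    proof -
      have "s powr (\<alpha> - 1) * p = p powr \<alpha> * q powr (1 - \<alpha>)" "s powr \<alpha> * q = p powr \<alpha> * q powr (1 - \<alpha>)"
        using 3 by (simp_all add: s_def powr_divide powr_diff powr_add field_simps)
      then show ?thesis by (simp add: algebra_simps)
    qed
    finally have "renyi_term \<alpha> p q = ereal (1 - t) * ereal (T p1 q1) + ereal t * ereal (T p2 q2)"
      using 3 by (simp add: renyi_term_def)
    also have "\<dots> \<le> ereal (1 - t) * renyi_term \<alpha> p1 q1 + ereal t * renyi_term \<alpha> p2 q2"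
      unfolding T_def using assms s
      by (intro add_mono ereal_mult_left_mono renyi_term_ge_tangent) auto
    finally show ?thesis by (simp add: p_def q_def)
  qed
qed

lemma renyi_moment_mix_le:
  assumes "1 < \<alpha>" "0 \<le> t" "t \<le> 1"
    and "\<And>z. 0 \<le> p1 z \<and> 0 \<le> p2 z \<and> 0 \<le> q1 z \<and> 0 \<le> q2 z"
  shows "renyi_moment \<alpha> (mix t p1 p2) (mix t q1 q2)
           \<le> ereal (1 - t) * renyi_moment \<alpha> p1 q1 + ereal t * renyi_moment \<alpha> p2 q2"
proof -
  have "renyi_moment \<alpha> (mix t p1 p2) (mix t q1 q2)
        \<le> (ereal (1 - t) * renyi_term \<alpha> (p1 0) (q1 0) + ereal t * renyi_term \<alpha> (p2 0) (q2 0))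
          + (ereal (1 - t) * renyi_term \<alpha> (p1 1) (q1 1) + ereal t * renyi_term \<alpha> (p2 1) (q2 1))"
    unfolding renyi_moment_eq mix_def using assms by (intro add_mono renyi_term_convex) auto
  also have "\<dots> = ereal (1 - t) * renyi_moment \<alpha> p1 q1 + ereal t * renyi_moment \<alpha> p2 q2"
    using assms unfolding renyi_moment_eq
    by (simp add: ereal_right_distrib renyi_term_nonneg ac_simps)
  finally show ?thesis .
qed

lemma renyi_moment_self:
  assumes "0 \<le> p 0" "0 \<le> p 1" "p 0 + p 1 = 1"
  shows "renyi_moment \<alpha> p p = 1"
  using assms by (simp add: renyi_moment_eq renyi_term_self)

lemma renyi_moment_ge_one:
  assumes "1 < \<alpha>" "\<And>z. 0 \<le> p z \<and> 0 \<le> q z" "p 0 + p 1 = 1" "q 0 + q 1 = 1"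
  shows "1 \<le> renyi_moment \<alpha> p q"
proof -
  have "(1::ereal) = ereal (\<alpha> * p 0 - (\<alpha> - 1) * q 0) + ereal (\<alpha> * p 1 - (\<alpha> - 1) * q 1)"
    using assms(3,4) by (simp add: algebra_simps flip: distrib_left)
  also have "\<dots> \<le> renyi_moment \<alpha> p q"
    unfolding renyi_moment_eq using assms renyi_term_ge_tangent[of \<alpha> _ _ 1]
    by (intro add_mono) auto
  finally show ?thesis .
qed

lemma renyi_moment_rr_mix_flip:
  "renyi_moment \<alpha> (rr_mix \<theta> (1 - a)) (rr_mix \<theta> (1 - b)) = renyi_moment \<alpha> (rr_mix \<theta> a) (rr_mix \<theta> b)"
  unfolding renyi_moment_eq rr_mix_one_minus by (rule add.commute)

lemma quasiconvex_on_renyi_moment_rr_mix: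
  assumes "1 < \<alpha>" "\<theta> \<in> {0..1}"
  shows "quasiconvex_on ({0..1} \<times> {0..1}) (\<lambda>(a, b). renyi_moment \<alpha> (rr_mix \<theta> a) (rr_mix \<theta> b))"
proof (rule quasiconvex_on_rr_mix[OF assms(2)])
  fix t :: real and p1 p2 q1 q2 c
  assume t: "t \<in> {0..1}" and nonneg: "\<And>z. 0 \<le> p1 z \<and> 0 \<le> p2 z \<and> 0 \<le> q1 z \<and> 0 \<le> q2 z"
    and le: "renyi_moment \<alpha> p1 q1 \<le> c" "renyi_moment \<alpha> p2 q2 \<le> c"
  have "renyi_moment \<alpha> (mix t p1 p2) (mix t q1 q2)
        \<le> ereal (1 - t) * renyi_moment \<alpha> p1 q1 + ereal t * renyi_moment \<alpha> p2 q2"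
    using assms(1) t nonneg by (intro renyi_moment_mix_le) auto
  also have "\<dots> \<le> ereal (1 - t) * c + ereal t * c"
    using t le by (intro add_mono ereal_mult_left_mono) auto
  also have "\<dots> = c"
    using t by (simp flip: ereal_left_distrib)
  finally show "renyi_moment \<alpha> (mix t p1 p2) (mix t q1 q2) \<le> c" .
qed

lemma renyi_moment_rr_mix_diag_le:
  assumes "1 < \<alpha>" "\<theta> \<in> {0..1}" "c \<in> {0..1}" "a \<in> {0..1}" "b \<in> {0..1}"
  shows "renyi_moment \<alpha> (rr_mix \<theta> c) (rr_mix \<theta> c) \<le> renyi_moment \<alpha> (rr_mix \<theta> a) (rr_mix \<theta> b)"
  by (metis assms renyi_moment_self renyi_moment_ge_one rr_mix_nonneg rr_mix_sum)

lemma Max_mix_Bern_eq: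
  fixes F :: "(nat \<Rightarrow> real) \<Rightarrow> (nat \<Rightarrow> real) \<Rightarrow> 'b::linorder"
  shows "(MAX \<tau>\<in>{\<theta>, 1 - \<theta>}. F (mix w1 (Bern \<theta>) (Bern \<tau>)) (mix w2 (Bern \<theta>) (Bern (1 - \<tau>))))
           = max (F (rr_mix \<theta> w1) (rr_mix \<theta> 0)) (F (rr_mix \<theta> 0) (rr_mix \<theta> w2))"
proof -
  have "mix w p p = p" for w and p :: "nat \<Rightarrow> real"
    by (simp add: fun_eq_iff mix_def algebra_simps)
  then show ?thesis
    by (simp add: rr_mix_zero max.commute flip: rr_mix_def)
qed

theorem mainTheorem8:
  fixes A :: "'a set" and x x' :: "'a set" and h :: "'a set \<Rightarrow> nat"
    and \<theta> r :: real and Kp Km :: nat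
  assumes "finite A" and "x \<subseteq> A" and "x' \<subseteq> A"
    and "\<And>y. h y \<in> {0, 1}"
    and "0 \<le> \<theta>" and "\<theta> \<le> 1" and "0 \<le> r" and "r \<le> 1"
    and "neighbours Kp Km x x'"
  defines "w1 \<equiv> 1 - (1 - r) ^ Km" and "w2 \<equiv> 1 - (1 - r) ^ Kp"
  shows "(\<forall>\<alpha>::real. 0 \<le> \<alpha> \<longrightarrow>
            hockey_stick \<alpha> (subsampled_pmf h \<theta> r x) (subsampled_pmf h \<theta> r x')
            \<le> (MAX \<tau>\<in>{\<theta>, 1 - \<theta>}. hockey_stick \<alpha>
                  (mix w1 (Bern \<theta>) (Bern \<tau>)) (mix w2 (Bern \<theta>) (Bern (1 - \<tau>)))))
       \<and> (\<forall>\<alpha>::real. 1 < \<alpha> \<longrightarrow>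
            renyi_moment \<alpha> (subsampled_pmf h \<theta> r x) (subsampled_pmf h \<theta> r x')
            \<le> (MAX \<tau>\<in>{\<theta>, 1 - \<theta>}. renyi_moment \<alpha>
                  (mix w1 (Bern \<theta>) (Bern \<tau>)) (mix w2 (Bern \<theta>) (Bern (1 - \<tau>)))))"
proof -
  define g :: "'a set \<Rightarrow> real" where "g y = (if h y = 0 then 1 else 0)" for y
  have pmf: "subsampled_pmf h \<theta> r y = rr_mix \<theta> (poisson_expectation r y g)" if "y \<subseteq> A" for y
    unfolding g_def using assms(1,4) that by (intro subsampled_pmf_eq_rr_mix) (auto intro: finite_subset)
  have x: "finite x"
    using assms(1,2) finite_subset by blast
  have \<theta>: "\<theta> \<in> {0..1}" and g: "g y \<in> {0, 1}" for y
    using assms(5,6) by (simp_all add: g_def)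
  show ?thesis
    unfolding pmf[OF assms(2)] pmf[OF assms(3)] Max_mix_Bern_eq w1_def w2_def
    using \<theta>
    by (intro conjI allI impI neighbours_expectation_le[OF _ _ _ x assms(7,8,9) g]
        quasiconvex_on_hockey_stick_rr_mix hockey_stick_rr_mix_diag_le hockey_stick_rr_mix_flip
        quasiconvex_on_renyi_moment_rr_mix renyi_moment_rr_mix_diag_le renyi_moment_rr_mix_flip)
      auto
qed

end
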